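(* Assume Assumption A and let $p\ge2$. There is a constant $C=C(b,\sigma,T,p)$ such that (i) $\mathbb{E}|X^n_{t_l}-T_{m,\pm}X^n_{t_l}|^p\le Ch^{p/2}$ for $1\le l,m\le n$; (ii) $\mathbb{E}\Big|\nabla X^{n,t_k,X^n_{t_k}}_{t_m}-\dfrac{\mathcal D^n_{k+1}X^n_{t_m}}{\sigma(t_{k+1},X^n_{t_k})}\Big|^p\le Ch^{p/2}$ for $0\le k<m\le n$; (iii) $\mathbb{E}|\mathcal D^n_kX^n_{t_m}|^p\le C$ for $1\le k\le m\le n$.
   Context: Fix $T>0$, $n$, $h=T/n$, $t_j=jh$. Assumption A: $b,\sigma:[0,T]\times\mathbb{R}\to\mathbb{R}$ and their first and second space derivatives are continuous and bounded, these derivatives locally $\gamma$-Hölder in the parabolic metric, $b,\sigma$ $\tfrac12$-Hölder in time uniformly in space, $\sigma\ge\delta>0$. $(\varepsilon_i)_{i=1}^n$ i.i.d. Rademacher. $X^n_{t_0}=x$, $X^n_{t_k}=x+h\sum_{j=1}^kb(t_j,X^n_{t_{j-1}})+\sqrt h\sum_{j=1}^k\sigma(t_j,X^n_{t_{j-1}})\varepsilon_j$. For $x'\in\mathbb{R}$, $X^{n,t_k,x'}_{t_m}$ ($m\ge k$) is the same recursion started at time $t_k$ from $x'$ with $\varepsilon_{k+1},\dots,\varepsilon_m$, and $\nabla X^{n,t_k,x'}_{t_m}=1+h\sum_{l=k+1}^mb_x(t_l,X^{n,t_k,x'}_{t_{l-1}})\nabla X^{n,t_k,x'}_{t_{l-1}}+\sqrt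 h\sum_{l=k+1}^m\sigma_x(t_l,X^{n,t_k,x'}_{t_{l-1}})\nabla X^{n,t_k,x'}_{t_{l-1}}\varepsilon_l$. For $\xi=F(\varepsilon_1,\dots,\varepsilon_n)$: $T_{m,\pm}\xi:=F(\varepsilon_1,\dots,\varepsilon_{m-1},\pm1,\varepsilon_{m+1},\dots,\varepsilon_n)$ and $\mathcal D^n_m\xi:=(T_{m,+}\xi-T_{m,-}\xi)/(2\sqrt h)$. *)

theory Defs
  imports "HOL-Analysis.Analysis"
begin

definition dx :: "(real \<Rightarrow> real \<Rightarrow> real) \<Rightarrow> real \<Rightarrow> real \<Rightarrow> real" where
  "dx f t x = deriv (f t) x"

definition dxx :: "(real \<Rightarrow> real \<Rightarrow> real) \<Rightarrow> real \<Rightarrow> real \<Rightarrow> real" where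
  "dxx f t x = deriv (dx f t) x"

definition cont_bdd :: "real \<Rightarrow> (real \<Rightarrow> real \<Rightarrow> real) \<Rightarrow> bool" where
  "cont_bdd T f \<longleftrightarrow> continuous_on ({0..T} \<times> UNIV) (\<lambda>(t, x). f t x)
     \<and> (\<exists>M. \<forall>t\<in>{0..T}. \<forall>x. \<bar>f t x\<bar> \<le> M)"

definition loc_hoelder_par :: "real \<Rightarrow> real \<Rightarrow> (real \<Rightarrow> real \<Rightarrow> real) \<Rightarrow> bool" where
  "loc_hoelder_par T \<gamma> f \<longleftrightarrow> (\<forall>R>0. \<exists>L. \<forall>s\<in>{0..T}. \<forall>t\<in>{0..T}. \<forall>x y.
      \<bar>x\<bar> \<le> R \<longrightarrow> \<bar>y\<bar> \<le> R \<longrightarrow>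
      \<bar>f s x - f t y\<bar> \<le> L * (sqrt \<bar>s - t\<bar> + \<bar>x - y\<bar>) powr \<gamma>)"

definition half_hoelder_time :: "real \<Rightarrow> (real \<Rightarrow> real \<Rightarrow> real) \<Rightarrow> bool" where
  "half_hoelder_time T f \<longleftrightarrow> (\<exists>L. \<forall>s\<in>{0..T}. \<forall>t\<in>{0..T}. \<forall>x.
      \<bar>f s x - f t x\<bar> \<le> L * sqrt \<bar>s - t\<bar>)"

definition twice_space_diff :: "real \<Rightarrow> (real \<Rightarrow> real \<Rightarrow> real) \<Rightarrow> bool" where
  "twice_space_diff T f \<longleftrightarrow> (\<forall>t\<in>{0..T}. \<forall>x.
      (f t has_real_derivative dx f t x) (at x) \<and>
      (dx f t has_real_derivative dxx f t x) (at x))"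

definition assumption_A :: "real \<Rightarrow> (real \<Rightarrow> real \<Rightarrow> real) \<Rightarrow> (real \<Rightarrow> real \<Rightarrow> real) \<Rightarrow> bool" where
  "assumption_A T b \<sigma> \<longleftrightarrow>
     twice_space_diff T b \<and> twice_space_diff T \<sigma> \<and>
     cont_bdd T b \<and> cont_bdd T (dx b) \<and> cont_bdd T (dxx b) \<and>
     cont_bdd T \<sigma> \<and> cont_bdd T (dx \<sigma>) \<and> cont_bdd T (dxx \<sigma>) \<and>
     (\<exists>\<gamma>. 0 < \<gamma> \<and> \<gamma> \<le> 1 \<and>
        loc_hoelder_par T \<gamma> (dx b) \<and> loc_hoelder_par T \<gamma> (dxx b) \<and>
        loc_hoelder_par T \<gamma> (dx \<sigma>) \<and> loc_hoelder_par T \<gamma> (dxx \<sigma>)) \<and>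
     half_hoelder_time T b \<and> half_hoelder_time T \<sigma> \<and>
     (\<exists>\<delta>>0. \<forall>t\<in>{0..T}. \<forall>x. \<sigma> t x \<ge> \<delta>)"

text \<open>Euler scheme with Rademacher increments e :: nat => real (e j = epsilon_j),
  step h = T/n, t_j = j*h. Xsch T b sigma n k x e m = X^{n,t_k,x}_{t_m} for m >= k
  (and = x for m <= k).\<close>
primrec Xsch :: "real \<Rightarrow> (real \<Rightarrow> real \<Rightarrow> real) \<Rightarrow> (real \<Rightarrow> real \<Rightarrow> real) \<Rightarrow> nat \<Rightarrow> nat
     \<Rightarrow> real \<Rightarrow> (nat \<Rightarrow> real) \<Rightarrow> nat \<Rightarrow> real" where
  "Xsch T b \<sigma> n k x e 0 = x"
| "Xsch T b \<sigma> n k x e (Suc m) =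
     (if Suc m \<le> k then x else
        Xsch T b \<sigma> n k x e m
        + (T / n) * b (real (Suc m) * (T / n)) (Xsch T b \<sigma> n k x e m)
        + sqrt (T / n) * \<sigma> (real (Suc m) * (T / n)) (Xsch T b \<sigma> n k x e m) * e (Suc m))"

text \<open>Discrete derivative process nabla X^{n,t_k,x}_{t_m}; the recursion
  G_m = G_{m-1} + h b_x(t_m, X_{m-1}) G_{m-1} + sqrt h sigma_x(t_m, X_{m-1}) G_{m-1} eps_m,
  G_k = 1, is exactly the summed formula of the paper.\<close>
primrec gradX :: "real \<Rightarrow> (real \<Rightarrow> real \<Rightarrow> real) \<Rightarrow> (real \<Rightarrow> real \<Rightarrow> real) \<Rightarrow> nat \<Rightarrow> nat
     \<Rightarrow> real \<Rightarrow> (nat \<Rightarrow> real) \<Rightarrow> nat \<Rightarrow> real" where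
  "gradX T b \<sigma> n k x e 0 = 1"
| "gradX T b \<sigma> n k x e (Suc m) =
     (if Suc m \<le> k then 1 else
        gradX T b \<sigma> n k x e m
        + (T / n) * dx b (real (Suc m) * (T / n)) (Xsch T b \<sigma> n k x e m) * gradX T b \<sigma> n k x e m
        + sqrt (T / n) * dx \<sigma> (real (Suc m) * (T / n)) (Xsch T b \<sigma> n k x e m)
            * gradX T b \<sigma> n k x e m * e (Suc m))"

definition Erad :: "nat \<Rightarrow> ((nat \<Rightarrow> real) \<Rightarrow> real) \<Rightarrow> real" where
  "Erad n F = (\<Sum>e\<in>PiE {1..n} (\<lambda>_. {-1, 1}). F e) / 2 ^ n"

definition Tshift :: "nat \<Rightarrow> real \<Rightarrow> ((nat \<Rightarrow> real) \<Rightarrow> real) \<Rightarrow> (nat \<Rightarrow> real) \<Rightarrow> real" where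
  "Tshift m s F e = F (e(m := s))"

definition Dn :: "real \<Rightarrow> nat \<Rightarrow> nat \<Rightarrow> ((nat \<Rightarrow> real) \<Rightarrow> real) \<Rightarrow> (nat \<Rightarrow> real) \<Rightarrow> real" where
  "Dn T n m F e = (Tshift m 1 F e - Tshift m (-1) F e) / (2 * sqrt (T / n))"

end

theory Submission
  imports Defs
begin

(* All three estimates come from one mechanism. Each quantity Z_j satisfies a linear recursion
   Z_{j+1} = Z_j (1 + h c + sqrt h a eps_{j+1}) + h alpha + sqrt h beta eps_{j+1} whose coefficients do
   not depend on eps_{j+1}, with |c|, |a| <= L and |alpha|, |beta| <= d. Writing Z_{j+1} = Y + eps_{j+1} W
   and averaging over the two signs, the first-order terms of |Y +- W|^p cancel, so
   E|Z_{j+1}|^p <= e^{Kh} E|Z_j|^p + K h E d^p, and a discrete Gronwall argument bounds E|Z_m|^p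
   uniformly in n.
   For D_k X the difference quotients of b and sigma give such a recursion without forcing, started
   at sigma(t_k, X_{k-1}); this is (iii). Flipping one sign moves X_l by at most 2 sqrt h |D_m X_l|,
   which gives (i). For (ii), (nabla X - D_{k+1} X / sigma) / sqrt h satisfies the recursion with the
   derivatives b_x, sigma_x as coefficients and Taylor remainders as forcing; these are quadratic in
   the flipped difference, hence controlled by (iii) with exponent 2p. *)

section \<open>A one-step moment inequality\<close>

lemma one_plus_powr_le_quadratic:
  fixes p t :: real
  assumes p: "p \<ge> 2" and t: "\<bar>t\<bar> \<le> 1/2"
  shows "(1 + t) powr p \<le> 1 + p * t + p * (p - 1) * (3/2) powr (p - 2) / 2 * t\<^sup>2"
proof (cases "t = 0")
  case False
  define D where "D = (\<lambda>m x. (\<Prod>i<m. p - real i) * (1 + x) powr (p - real m))"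
  have D: "DERIV (D m) x :> D (Suc m) x" if "m < 2" "-1/2 \<le> x" "x \<le> 1/2" for m x
  proof -
    have "DERIV (\<lambda>x. (1 + x) powr (p - real m)) x :> (p - real m) * (1 + x) powr (p - real m - 1) * 1"
      using that by (intro DERIV_fun_powr derivative_eq_intros) auto
    from DERIV_cmult[OF this, of "\<Prod>i<m. p - real i"] show ?thesis
      by (simp add: D_def algebra_simps diff_diff_eq)
  qed
  have "-1/2 \<le> t" "t \<le> 1/2"
    using t by auto
  obtain \<xi> where \<xi>: "if t < 0 then t < \<xi> \<and> \<xi> < 0 else 0 < \<xi> \<and> \<xi> < t"
    and taylor: "D 0 t = (\<Sum>m<2. D m 0 / fact m * (t - 0) ^ m) + D 2 \<xi> / fact 2 * (t - 0)\<^sup>2"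
    using Taylor[of 2 D "D 0" "-1/2" "1/2" 0 t] D \<open>-1/2 \<le> t\<close> \<open>t \<le> 1/2\<close> False by force
  have "D 2 \<xi> = p * (p - 1) * (1 + \<xi>) powr (p - 2)"
    by (simp add: D_def numeral_2_eq_2 lessThan_Suc)
  also have "\<dots> \<le> p * (p - 1) * (3/2) powr (p - 2)"
    using p t \<xi> by (intro mult_left_mono powr_mono2) (auto split: if_splits)
  finally have "D 2 \<xi> / fact 2 * t\<^sup>2 \<le> p * (p - 1) * (3/2) powr (p - 2) / 2 * t\<^sup>2"
    by (intro mult_right_mono) (auto simp: fact_numeral)
  then show ?thesis
    using taylor by (simp add: D_def numeral_2_eq_2 lessThan_Suc)
qed simp

lemma powr_average_plus_minus_le:
  fixes p :: real
  assumes p: "p \<ge> 2"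
  shows "\<exists>C\<ge>0. \<forall>y w::real. (\<bar>y + w\<bar> powr p + \<bar>y - w\<bar> powr p) / 2
           \<le> \<bar>y\<bar> powr p + C * (\<bar>y\<bar> powr (p - 2) * w\<^sup>2 + \<bar>w\<bar> powr p)"
proof -
  define C0 where "C0 = p * (p - 1) * (3/2) powr (p - 2) / 2"
  define C where "C = 3 powr p + C0"
  have C0: "0 \<le> C0" "C0 \<le> C" using p by (auto simp: C0_def C_def)
  have "(\<bar>y + w\<bar> powr p + \<bar>y - w\<bar> powr p) / 2
      \<le> \<bar>y\<bar> powr p + C * (\<bar>y\<bar> powr (p - 2) * w\<^sup>2 + \<bar>w\<bar> powr p)" for y w :: real
  proof (cases "\<bar>y\<bar> \<le> 2 * \<bar>w\<bar>")
    case True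
    have "\<bar>y + w\<bar> powr p \<le> (3 * \<bar>w\<bar>) powr p" "\<bar>y - w\<bar> powr p \<le> (3 * \<bar>w\<bar>) powr p"
      using True p by (intro powr_mono2; simp)+
    then have "(\<bar>y + w\<bar> powr p + \<bar>y - w\<bar> powr p) / 2 \<le> 3 powr p * \<bar>w\<bar> powr p"
      by (simp add: powr_mult)
    also have "\<dots> \<le> C * (\<bar>y\<bar> powr (p - 2) * w\<^sup>2 + \<bar>w\<bar> powr p)"
      using C0 by (intro mult_mono) (auto simp: C_def)
    finally show ?thesis
      using C0 by (simp add: add_increasing)
  next
    case False
    define t where "t = w / y"
    have t: "\<bar>t\<bar> \<le> 1/2" and y: "y \<noteq> 0"
      using False by (auto simp: t_def abs_divide divide_le_eq)
    have "y + w = y * (1 + t)" "y - w = y * (1 + - t)"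
      using y by (auto simp: t_def field_simps)
    then have "\<bar>y + w\<bar> = \<bar>y\<bar> * (1 + t)" "\<bar>y - w\<bar> = \<bar>y\<bar> * (1 + - t)"
      using t by (simp_all add: abs_mult)
    then have "\<bar>y + w\<bar> powr p = \<bar>y\<bar> powr p * (1 + t) powr p"
      "\<bar>y - w\<bar> powr p = \<bar>y\<bar> powr p * (1 + - t) powr p"
      using t by (simp_all only: powr_mult abs_ge_zero)
    then have split: "(\<bar>y + w\<bar> powr p + \<bar>y - w\<bar> powr p) / 2
        = \<bar>y\<bar> powr p * (((1 + t) powr p + (1 + - t) powr p) / 2)"
      by (simp add: add_divide_distrib distrib_left)
    have "(1 + t) powr p \<le> 1 + p * t + C0 * t\<^sup>2" "(1 + - t) powr p \<le> 1 + p * - t + C0 * (- t)\<^sup>2"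
      unfolding C0_def using p t by (intro one_plus_powr_le_quadratic; simp)+
    \<comment> \<open>the first-order terms \<open>\<plusminus>p t\<close> cancel\<close>
    then have "(\<bar>y + w\<bar> powr p + \<bar>y - w\<bar> powr p) / 2 \<le> \<bar>y\<bar> powr p * (1 + C0 * t\<^sup>2)"
      unfolding split by (intro mult_left_mono) auto
    also have "\<dots> = \<bar>y\<bar> powr p + C0 * (\<bar>y\<bar> powr (p - 2) * w\<^sup>2)"
      using y by (simp add: t_def power_divide powr_diff powr_numeral field_simps)
    also have "\<dots> \<le> \<bar>y\<bar> powr p + C * (\<bar>y\<bar> powr (p - 2) * w\<^sup>2 + \<bar>w\<bar> powr p)"
      using C0 by (intro add_left_mono mult_mono) auto
    finally show ?thesis .
  qed
  moreover have "0 \<le> C"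
    using C0 by linarith
  ultimately show ?thesis
    by blast
qed

lemma powr_mult_powr_le_add:
  fixes x y p q :: real
  assumes "0 \<le> x" "0 \<le> y" "0 \<le> q" "q \<le> p"
  shows "x powr (p - q) * y powr q \<le> x powr p + y powr p"
proof -
  have "x powr (p - q) * y powr q \<le> max x y powr (p - q) * max x y powr q"
    using assms by (intro mult_mono powr_mono2) auto
  also have "\<dots> = max x y powr p"
    by (simp flip: powr_add)
  also have "\<dots> \<le> x powr p + y powr p"
    by (simp add: max_def)
  finally show ?thesis .
qed

lemma powr_add_le_two_powr:
  fixes x y p :: real
  assumes "0 \<le> x" "0 \<le> y" "0 \<le> p"
  shows "(x + y) powr p \<le> 2 powr p * (x powr p + y powr p)"
proof -
  have "(x + y) powr p \<le> (2 * max x y) powr p"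
    using assms by (intro powr_mono2) auto
  also have "\<dots> \<le> 2 powr p * (x powr p + y powr p)"
    using assms by (auto simp: powr_mult max_def intro!: mult_left_mono)
  finally show ?thesis .
qed

lemma powr_lincomb_le:
  fixes a b x y p :: real
  assumes "0 \<le> a" "0 \<le> b" "0 \<le> x" "0 \<le> y" "0 \<le> p"
  shows "(a * x + b * y) powr p \<le> 2 powr p * (a powr p + b powr p) * (x powr p + y powr p)"
proof -
  have "(a * x + b * y) powr p \<le> 2 powr p * (a powr p * x powr p + b powr p * y powr p)"
    using powr_add_le_two_powr[of "a * x" "b * y" p] assms by (simp add: powr_mult)
  also have "\<dots> \<le> 2 powr p * ((a powr p + b powr p) * (x powr p + y powr p))"
    by (intro mult_left_mono) (auto simp: algebra_simps)
  finally show ?thesis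
    by (simp add: mult.assoc)
qed

lemma powr_add_le_mvt:
  fixes a b p :: real
  assumes "0 \<le> a" "0 \<le> b" "1 \<le> p"
  shows "(a + b) powr p \<le> a powr p + p * b * (a + b) powr (p - 1)"
proof (cases "b = 0 \<or> a = 0")
  case True
  then show ?thesis
  proof
    assume "a = 0"
    have "b powr p = b * b powr (p - 1)"
      using assms by (simp add: powr_mult_base)
    also have "\<dots> \<le> p * b * b powr (p - 1)"
      using mult_right_mono[of 1 p b] assms by (intro mult_right_mono) auto
    finally show ?thesis
      using \<open>a = 0\<close> by simp
  qed simp
next
  case False
  then have ab: "0 < a" "a < a + b"
    using assms by auto
  have "DERIV (\<lambda>x. x powr p) x :> p * x powr (p - 1)" if "a \<le> x" for x
    using that ab by (intro has_real_derivative_powr) auto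
  then obtain z where z: "a < z" "z < a + b" "(a + b) powr p - a powr p = (a + b - a) * (p * z powr (p - 1))"
    using MVT2[OF ab(2), of "\<lambda>x. x powr p" "\<lambda>x. p * x powr (p - 1)"] by auto
  have "z powr (p - 1) \<le> (a + b) powr (p - 1)"
    using z ab assms by (intro powr_mono2) auto
  then show ?thesis
    using z assms by (simp add: algebra_simps mult_left_mono)
qed

lemma drift_powr_le:
  fixes \<epsilon> d h T L r :: real
  assumes "0 \<le> \<epsilon>" "0 \<le> d" "0 \<le> h" "h \<le> T" "0 \<le> L" "1 \<le> r"
  shows "(\<epsilon> * (1 + h * L) + h * d) powr r
    \<le> exp (r * L * h) * \<epsilon> powr r + r * h * ((\<epsilon> * (1 + T * L) + T * d) powr r + d powr r)"
proof -
  define M where "M = \<epsilon> * (1 + T * L) + T * d"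
  have M: "\<epsilon> * (1 + h * L) + h * d \<le> M"
    using assms by (auto simp: M_def intro!: add_mono mult_mono)
  have "0 \<le> M"
    using assms by (simp add: M_def)
  have "(\<epsilon> * (1 + h * L) + h * d) powr r
      \<le> (\<epsilon> * (1 + h * L)) powr r + r * (h * d) * (\<epsilon> * (1 + h * L) + h * d) powr (r - 1)"
    using assms by (intro powr_add_le_mvt) auto
  also have "(\<epsilon> * (1 + h * L)) powr r \<le> exp (r * L * h) * \<epsilon> powr r"
  proof -
    have "(1 + h * L) powr r \<le> exp (h * L) powr r"
      using assms by (intro powr_mono2) auto
    then show ?thesis
      using assms by (simp add: powr_mult exp_powr_real mult_ac mult_left_mono)
  qed
  also have "r * (h * d) * (\<epsilon> * (1 + h * L) + h * d) powr (r - 1) \<le> r * h * (M powr (r - 1) * d)"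
    using M assms by (simp add: mult_ac mult_left_mono powr_mono2)
  also have "\<dots> \<le> r * h * (M powr r + d powr r)"
    using powr_mult_powr_le_add[of M d 1 r] \<open>0 \<le> M\<close> assms
    by (intro mult_left_mono) (auto simp: powr_one)
  finally show ?thesis
    unfolding M_def by simp
qed

lemma sqrt_powr: "0 \<le> x \<Longrightarrow> sqrt x powr p = x powr (p / 2)"
  by (simp add: powr_powr flip: powr_half_sqrt)

lemma sqrt_mult_sqrt_mult: "0 \<le> x \<Longrightarrow> sqrt x * (sqrt x * y) = x * y"
  by (simp flip: mult.assoc)

lemma perturbation_powr_le:
  fixes h T r A B M y w :: real
  assumes h: "0 < h" "h \<le> T" and r: "2 \<le> r" and y: "\<bar>y\<bar> \<le> A" and A: "0 \<le> A" "A \<le> M"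
    and B: "0 \<le> B" and w: "\<bar>w\<bar> \<le> sqrt h * B"
  shows "\<bar>y\<bar> powr (r - 2) * w\<^sup>2 + \<bar>w\<bar> powr r \<le> h * (M powr r + (1 + T powr (r/2 - 1)) * B powr r)"
proof -
  have "w\<^sup>2 \<le> (sqrt h * B)\<^sup>2"
    using power_mono[OF w abs_ge_zero, of 2] by (simp only: power2_abs)
  then have "\<bar>y\<bar> powr (r - 2) * w\<^sup>2 \<le> A powr (r - 2) * (sqrt h * B)\<^sup>2"
    using y r by (intro mult_mono powr_mono2) simp_all
  also have "\<dots> = h * (A powr (r - 2) * B powr 2)"
    using h B by (simp add: power_mult_distrib)
  also have "\<dots> \<le> h * (A powr r + B powr r)"
    using powr_mult_powr_le_add[of A B 2 r] A B h r by (intro mult_left_mono) auto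
  also have "\<dots> \<le> h * (M powr r + B powr r)"
    using A h r by (intro mult_left_mono add_right_mono powr_mono2) auto
  finally have mixed: "\<bar>y\<bar> powr (r - 2) * w\<^sup>2 \<le> h * (M powr r + B powr r)" .
  have "\<bar>w\<bar> powr r \<le> (sqrt h * B) powr r"
    using w r by (intro powr_mono2) auto
  also have "\<dots> = h * h powr (r/2 - 1) * B powr r"
  proof -
    have "sqrt h powr r = h * h powr (r/2 - 1)"
      using h by (simp add: sqrt_powr powr_mult_base)
    then show ?thesis
      using h B by (simp add: powr_mult)
  qed
  also have "\<dots> \<le> h * T powr (r/2 - 1) * B powr r"
    using h r by (intro mult_right_mono mult_left_mono powr_mono2) auto
  finally show ?thesis
    using mixed by (simp add: algebra_simps)
qed

lemma exp_absorb_linear_le: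
  fixes a h K0 x y :: real
  assumes "0 \<le> a" "0 \<le> h" "0 \<le> K0" "0 \<le> x" "0 \<le> y"
  shows "exp (a * h) * x + h * (K0 * (x + y)) \<le> exp ((a + K0) * h) * x + (a + K0) * h * y"
proof -
  have "exp (a * h) + h * K0 \<le> exp (a * h) * (1 + h * K0)"
    using mult_right_mono[of 1 "exp (a * h)" "h * K0"] assms by (simp add: distrib_left)
  also have "\<dots> \<le> exp (a * h) * exp (h * K0)"
    by (intro mult_left_mono) auto
  also have "\<dots> = exp ((a + K0) * h)"
    by (simp add: algebra_simps flip: exp_add)
  finally have "(exp (a * h) + h * K0) * x + h * K0 * y \<le> exp ((a + K0) * h) * x + (a + K0) * h * y"
    using assms mult_nonneg_nonneg[of a h] by (intro add_mono mult_right_mono) (auto simp: algebra_simps)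
  then show ?thesis
    by (simp add: algebra_simps)
qed

(* One averaged step of a linear recursion: Z' is Y + W or Y - W with probability 1/2 each, where Y
   and W are controlled by eps = |Z| and the size d of the forcing. *)
definition symmetric_step_estimate :: "real \<Rightarrow> real \<Rightarrow> real \<Rightarrow> real \<Rightarrow> bool" where
  "symmetric_step_estimate r T L K \<longleftrightarrow> (\<forall>h \<epsilon> d y w. 0 < h \<longrightarrow> h \<le> T \<longrightarrow> 0 \<le> \<epsilon> \<longrightarrow> 0 \<le> d \<longrightarrow>
     \<bar>y\<bar> \<le> \<epsilon> * (1 + h * L) + h * d \<longrightarrow> \<bar>w\<bar> \<le> sqrt h * (\<epsilon> * L + d) \<longrightarrow>
     (\<bar>y + w\<bar> powr r + \<bar>y - w\<bar> powr r) / 2 \<le> exp (K * h) * \<epsilon> powr r + K * h * d powr r)"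

lemma symmetric_step_estimateD:
  "symmetric_step_estimate r T L K \<Longrightarrow> 0 < h \<Longrightarrow> h \<le> T \<Longrightarrow> 0 \<le> \<epsilon> \<Longrightarrow> 0 \<le> d \<Longrightarrow>
   \<bar>y\<bar> \<le> \<epsilon> * (1 + h * L) + h * d \<Longrightarrow> \<bar>w\<bar> \<le> sqrt h * (\<epsilon> * L + d) \<Longrightarrow>
   (\<bar>y + w\<bar> powr r + \<bar>y - w\<bar> powr r) / 2 \<le> exp (K * h) * \<epsilon> powr r + K * h * d powr r"
  unfolding symmetric_step_estimate_def by blast

lemma symmetric_step_estimate_exists:
  fixes r T L :: real
  assumes r: "2 \<le> r" and T: "0 < T" and L: "0 \<le> L"
  shows "\<exists>K\<ge>0. symmetric_step_estimate r T L K"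
proof -
  obtain C where C: "0 \<le> C" and avg: "\<And>y w. (\<bar>y + w\<bar> powr r + \<bar>y - w\<bar> powr r) / 2
      \<le> \<bar>y\<bar> powr r + C * (\<bar>y\<bar> powr (r - 2) * w\<^sup>2 + \<bar>w\<bar> powr r)"
    using powr_average_plus_minus_le[OF r] by blast
  define K0 where "K0 = (r + C) * (2 powr r * ((1 + T * L) powr r + T powr r)) + r
    + C * (1 + T powr (r/2 - 1)) * (2 powr r * (L powr r + 1))"
  define K where "K = r * L + K0"
  have K0: "0 \<le> K0"
    using r C by (simp add: K0_def)
  have "(\<bar>y + w\<bar> powr r + \<bar>y - w\<bar> powr r) / 2 \<le> exp (K * h) * \<epsilon> powr r + K * h * d powr r"
    if h: "0 < h" "h \<le> T" and \<epsilon>: "0 \<le> \<epsilon>" and d: "0 \<le> d"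
      and y: "\<bar>y\<bar> \<le> \<epsilon> * (1 + h * L) + h * d" and w: "\<bar>w\<bar> \<le> sqrt h * (\<epsilon> * L + d)" for h \<epsilon> d y w
  proof -
    define A where "A = \<epsilon> * (1 + h * L) + h * d"
    define B where "B = \<epsilon> * L + d"
    define M where "M = \<epsilon> * (1 + T * L) + T * d"
    define P where "P = \<epsilon> powr r + d powr r"
    have pos: "0 \<le> A" "A \<le> M" "0 \<le> B"
      using h \<epsilon> d L by (auto simp: A_def B_def M_def intro!: add_mono mult_mono)
    have "\<bar>y\<bar> powr r \<le> A powr r"
      using y r by (intro powr_mono2) (auto simp: A_def)
    also have "A powr r \<le> exp (r * L * h) * \<epsilon> powr r + r * h * (M powr r + d powr r)"
      unfolding A_def M_def using h \<epsilon> d L r by (intro drift_powr_le) auto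
    finally have "(\<bar>y + w\<bar> powr r + \<bar>y - w\<bar> powr r) / 2
        \<le> exp (r * L * h) * \<epsilon> powr r + r * h * (M powr r + d powr r)
          + C * (h * (M powr r + (1 + T powr (r/2 - 1)) * B powr r))"
      using avg[of y w] mult_left_mono[OF perturbation_powr_le[OF h r _ pos(1,2,3)] C] y w
      by (force simp: A_def B_def)
    also have "\<dots> = exp (r * L * h) * \<epsilon> powr r
        + h * ((r + C) * M powr r + r * d powr r + C * (1 + T powr (r/2 - 1)) * B powr r)"
      by (simp add: algebra_simps)
    also have "\<dots> \<le> exp (r * L * h) * \<epsilon> powr r + h * (K0 * P)"
    proof -
      have "M powr r \<le> 2 powr r * ((1 + T * L) powr r + T powr r) * P"
        unfolding M_def P_def mult.commute[of \<epsilon>] using T L \<epsilon> d r by (intro powr_lincomb_le) auto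
      moreover have "B powr r \<le> 2 powr r * (L powr r + 1) * P"
        using powr_lincomb_le[of L 1 \<epsilon> d r] T L \<epsilon> d r by (simp add: B_def P_def mult.commute)
      moreover have "K0 * P = (r + C) * (2 powr r * ((1 + T * L) powr r + T powr r) * P) + r * P
          + C * (1 + T powr (r/2 - 1)) * (2 powr r * (L powr r + 1) * P)"
        by (simp add: K0_def algebra_simps)
      moreover have "d powr r \<le> P"
        by (simp add: P_def)
      ultimately show ?thesis
        using C r h by (auto intro!: add_mono mult_left_mono)
    qed
    also have "\<dots> \<le> exp (K * h) * \<epsilon> powr r + K * h * d powr r"
      unfolding K_def P_def using h L r K0 by (intro exp_absorb_linear_le) auto
    finally show ?thesis .
  qed
  moreover have "0 \<le> K"
    using K0 r L by (simp add: K_def)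
  ultimately show ?thesis
    unfolding symmetric_step_estimate_def by blast
qed

section \<open>Rademacher averages and linear recursions\<close>

definition sign_vectors :: "nat \<Rightarrow> (nat \<Rightarrow> real) set" where
  "sign_vectors n = PiE {1..n} (\<lambda>_. {-1, 1})"

lemma card_sign_vectors: "card (sign_vectors n) = 2 ^ n"
  unfolding sign_vectors_def by (simp add: card_PiE numeral_2_eq_2)

lemma sign_vectors_upd: "e \<in> sign_vectors n \<Longrightarrow> s \<in> {-1, 1} \<Longrightarrow> j \<in> {1..n} \<Longrightarrow> e(j := s) \<in> sign_vectors n"
  unfolding sign_vectors_def by (auto simp: PiE_iff extensional_def)

lemma sign_vectors_value: "e \<in> sign_vectors n \<Longrightarrow> j \<in> {1..n} \<Longrightarrow> e j = 1 \<or> e j = -1"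
  unfolding sign_vectors_def by (auto simp: PiE_iff)

lemma Erad_eq_sum: "Erad n F = (\<Sum>e\<in>sign_vectors n. F e) / 2 ^ n"
  unfolding Erad_def sign_vectors_def ..

lemma Erad_mono: "(\<And>e. e \<in> sign_vectors n \<Longrightarrow> F e \<le> G e) \<Longrightarrow> Erad n F \<le> Erad n G"
  unfolding Erad_eq_sum by (intro divide_right_mono sum_mono) auto

lemma Erad_nonneg: "(\<And>e. e \<in> sign_vectors n \<Longrightarrow> 0 \<le> F e) \<Longrightarrow> 0 \<le> Erad n F"
  unfolding Erad_eq_sum by (intro divide_nonneg_nonneg sum_nonneg) auto

lemma Erad_const: "Erad n (\<lambda>_. c) = c"
  unfolding Erad_eq_sum by (simp add: card_sign_vectors)

lemma Erad_linear: "Erad n (\<lambda>e. A * F e + B * G e) = A * Erad n F + B * Erad n G"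
  unfolding Erad_eq_sum by (simp add: sum.distrib add_divide_distrib flip: sum_distrib_left)

lemma Erad_scale: "Erad n (\<lambda>e. A * F e) = A * Erad n F"
  using Erad_linear[of n A F 0 F] by simp

lemma Erad_flip_average:
  assumes j: "j \<in> {1..n}"
  shows "Erad n F = Erad n (\<lambda>e. (F (e(j := 1)) + F (e(j := -1))) / 2)"
proof -
  define flip where "flip e = e(j := - e j)" for e :: "nat \<Rightarrow> real"
  have "flip e \<in> sign_vectors n" if "e \<in> sign_vectors n" for e
    using sign_vectors_value[OF that j] by (auto simp: flip_def intro!: sign_vectors_upd[OF that _ j])
  then have "bij_betw flip (sign_vectors n) (sign_vectors n)"
    by (intro bij_betw_byWitness[where f' = flip]) (auto simp: flip_def)
  then have "(\<Sum>e\<in>sign_vectors n. F (flip e)) = (\<Sum>e\<in>sign_vectors n. F e)"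
    by (rule sum.reindex_bij_betw)
  moreover have "F (e(j := 1)) + F (e(j := -1)) = F e + F (flip e)" if "e \<in> sign_vectors n" for e
    using sign_vectors_value[OF that j] by (auto simp: flip_def fun_upd_idem)
  ultimately show ?thesis
    unfolding Erad_eq_sum by (simp add: sum.distrib flip: sum_divide_distrib cong: sum.cong)
qed

(* "F does not depend on the j-th sign": the form in which the recursions below state that their
   coefficients are predictable. *)
definition flip_invariant :: "nat \<Rightarrow> ((nat \<Rightarrow> real) \<Rightarrow> 'a) \<Rightarrow> bool" where
  "flip_invariant j F \<longleftrightarrow> (\<forall>e s. F (e(j := s)) = F e)"

lemma Erad_linear_step_moment_le:
  fixes Z Z' c a \<alpha> \<beta> d :: "(nat \<Rightarrow> real) \<Rightarrow> real"
  assumes est: "symmetric_step_estimate r T L K" and h: "0 < h" "h \<le> T" and j: "j \<in> {1..n}"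
    and rec: "\<And>e. Z' e = Z e * (1 + h * c e + sqrt h * a e * e j) + h * \<alpha> e + sqrt h * \<beta> e * e j"
    and inv: "flip_invariant j (\<lambda>e. (Z e, c e, a e, \<alpha> e, \<beta> e, d e))"
    and bnd: "\<And>e. e \<in> sign_vectors n \<Longrightarrow> \<bar>c e\<bar> \<le> L \<and> \<bar>a e\<bar> \<le> L \<and> \<bar>\<alpha> e\<bar> \<le> d e \<and> \<bar>\<beta> e\<bar> \<le> d e"
  shows "Erad n (\<lambda>e. \<bar>Z' e\<bar> powr r)
    \<le> exp (K * h) * Erad n (\<lambda>e. \<bar>Z e\<bar> powr r) + K * h * Erad n (\<lambda>e. d e powr r)"
proof -
  have "(\<bar>Z' (e(j := 1))\<bar> powr r + \<bar>Z' (e(j := -1))\<bar> powr r) / 2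
      \<le> exp (K * h) * \<bar>Z e\<bar> powr r + K * h * d e powr r" if "e \<in> sign_vectors n" for e
  proof -
    define Y where "Y = Z e * (1 + h * c e) + h * \<alpha> e"
    define W where "W = sqrt h * (Z e * a e + \<beta> e)"
    note b = bnd[OF that]
    have "\<bar>1 + h * c e\<bar> \<le> 1 + h * L"
      using b h by (auto simp: abs_mult intro!: order_trans[OF abs_triangle_ineq] mult_left_mono)
    then have Y: "\<bar>Y\<bar> \<le> \<bar>Z e\<bar> * (1 + h * L) + h * d e"
      unfolding Y_def using b h
      by (auto simp: abs_mult intro!: order_trans[OF abs_triangle_ineq] add_mono mult_left_mono)
    have W: "\<bar>W\<bar> \<le> sqrt h * (\<bar>Z e\<bar> * L + d e)"
      unfolding W_def using b h
      by (auto simp: abs_mult intro!: order_trans[OF abs_triangle_ineq] add_mono mult_left_mono)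
    have "Z' (e(j := 1)) = Y + W" "Z' (e(j := -1)) = Y - W"
      using inv by (simp_all add: rec flip_invariant_def Y_def W_def algebra_simps)
    moreover have "0 \<le> d e"
      using b by linarith
    ultimately show ?thesis
      using symmetric_step_estimateD[OF est h abs_ge_zero _ Y W] by simp
  qed
  then have "Erad n (\<lambda>e. \<bar>Z' e\<bar> powr r)
      \<le> Erad n (\<lambda>e. exp (K * h) * \<bar>Z e\<bar> powr r + K * h * d e powr r)"
    by (subst Erad_flip_average[OF j]) (rule Erad_mono)
  then show ?thesis
    by (simp add: Erad_linear)
qed

lemma exp_linear_recurrence_le:
  fixes u :: "nat \<Rightarrow> real" and q B :: real
  assumes "0 \<le> q" "0 \<le> B" "0 \<le> u m"
    and step: "\<And>j. m \<le> j \<Longrightarrow> j < N \<Longrightarrow> u (Suc j) \<le> exp q * u j + B"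
  shows "m + i \<le> N \<Longrightarrow> u (m + i) \<le> exp (q * i) * (u m + i * B)"
proof (induction i)
  case (Suc i)
  have "u (m + Suc i) \<le> exp q * u (m + i) + B"
    using step[of "m + i"] Suc.prems by simp
  also have "\<dots> \<le> exp q * (exp (q * i) * (u m + i * B)) + B"
    using Suc by (intro add_right_mono mult_left_mono) auto
  also have "\<dots> = exp (q * Suc i) * (u m + i * B) + B"
    by (simp add: algebra_simps flip: exp_add)
  also have "\<dots> \<le> exp (q * Suc i) * (u m + Suc i * B)"
    using assms mult_right_mono[of 1 "exp (q * Suc i)" B] by (simp add: algebra_simps)
  finally show ?case .
qed simp

lemma Erad_linear_recursion_moment_le:
  fixes Z c a \<alpha> \<beta> d :: "(nat \<Rightarrow> real) \<Rightarrow> nat \<Rightarrow> real" and T :: real and n :: nat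
  defines "h \<equiv> T / real n"
  assumes est: "symmetric_step_estimate r T L K" and T: "0 < T" and n: "1 \<le> n"
    and K: "0 \<le> K" and D: "0 \<le> D" and ml: "m \<le> l" "l \<le> n"
    and rec: "\<And>j e. m \<le> j \<Longrightarrow> j < n \<Longrightarrow> Z e (Suc j)
      = Z e j * (1 + h * c e j + sqrt h * a e j * e (Suc j)) + h * \<alpha> e j + sqrt h * \<beta> e j * e (Suc j)"
    and inv: "\<And>j. m \<le> j \<Longrightarrow> j < n \<Longrightarrow> flip_invariant (Suc j) (\<lambda>e. (Z e j, c e j, a e j, \<alpha> e j, \<beta> e j, d e j))"
    and bnd: "\<And>j e. m \<le> j \<Longrightarrow> j < n \<Longrightarrow> e \<in> sign_vectors n \<Longrightarrow>
      \<bar>c e j\<bar> \<le> L \<and> \<bar>a e j\<bar> \<le> L \<and> \<bar>\<alpha> e j\<bar> \<le> d e j \<and> \<bar>\<beta> e j\<bar> \<le> d e j"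
    and dbd: "\<And>j. m \<le> j \<Longrightarrow> j < n \<Longrightarrow> Erad n (\<lambda>e. d e j powr r) \<le> D"
  shows "Erad n (\<lambda>e. \<bar>Z e l\<bar> powr r) \<le> exp (K * T) * (Erad n (\<lambda>e. \<bar>Z e m\<bar> powr r) + K * T * D)"
proof -
  have h: "0 < h" "h \<le> T" "h * n = T"
    using T n by (auto simp: h_def field_simps)
  define u where "u j = Erad n (\<lambda>e. \<bar>Z e j\<bar> powr r)" for j
  have "u (Suc j) \<le> exp (K * h) * u j + K * h * D" if j: "m \<le> j" "j < n" for j
  proof -
    have "u (Suc j) \<le> exp (K * h) * u j + K * h * Erad n (\<lambda>e. d e j powr r)"
      unfolding u_def using j
      by (intro Erad_linear_step_moment_le[where Z = "\<lambda>e. Z e j" and c = "\<lambda>e. c e j" and a = "\<lambda>e. a e j"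
            and \<alpha> = "\<lambda>e. \<alpha> e j" and \<beta> = "\<lambda>e. \<beta> e j" and d = "\<lambda>e. d e j" and j = "Suc j",
            OF est h(1,2)] rec inv bnd) auto
    also have "\<dots> \<le> exp (K * h) * u j + K * h * D"
      using dbd[OF j] K h by (intro add_left_mono mult_left_mono) auto
    finally show ?thesis .
  qed
  then have "u (m + (l - m)) \<le> exp (K * h * (l - m)) * (u m + (l - m) * (K * h * D))"
    using K h D ml by (intro exp_linear_recurrence_le[of "K * h" _ u m n])
      (auto simp: u_def intro!: Erad_nonneg)
  moreover have "exp (K * h * (l - m)) * (u m + (l - m) * (K * h * D)) \<le> exp (K * T) * (u m + K * T * D)"
  proof -
    have hT: "h * (l - m) \<le> T"
      using h ml mult_left_mono[of "real (l - m)" n h] by auto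
    have "exp (K * h * (l - m)) \<le> exp (K * T)"
      using mult_left_mono[OF hT K] by (simp add: mult.assoc)
    moreover have "(l - m) * (K * h * D) \<le> K * T * D"
      using mult_left_mono[OF hT, of "K * D"] K D by (simp add: mult_ac)
    moreover have "0 \<le> u m"
      unfolding u_def by (rule Erad_nonneg) simp
    ultimately show ?thesis
      using K h D by (intro mult_mono) auto
  qed
  ultimately show ?thesis
    using ml by (simp add: u_def)
qed

section \<open>The Euler scheme\<close>

lemma Xsch_fun_upd_later: "j < i \<Longrightarrow> Xsch T b \<sigma> n k x (e(i := s)) j = Xsch T b \<sigma> n k x e j"
  by (induction j) auto

lemma gradX_fun_upd_later: "j < i \<Longrightarrow> gradX T b \<sigma> n k x (e(i := s)) j = gradX T b \<sigma> n k x e j"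
  by (induction j) (auto simp: Xsch_fun_upd_later)

lemma Xsch_before_start: "j \<le> k \<Longrightarrow> Xsch T b \<sigma> n k x e j = x"
  by (induction j) auto

lemma gradX_before_start: "j \<le> k \<Longrightarrow> gradX T b \<sigma> n k x e j = 1"
  by (induction j) auto

lemma Xsch_flow: "k \<le> j \<Longrightarrow> Xsch T b \<sigma> n k (Xsch T b \<sigma> n 0 x e k) e j = Xsch T b \<sigma> n 0 x e j"
  by (induction j) (auto simp: Xsch_before_start le_Suc_eq)

lemma gradX_Suc_flow:
  assumes "k \<le> j"
  shows "gradX T b \<sigma> n k (Xsch T b \<sigma> n 0 x e k) e (Suc j) = gradX T b \<sigma> n k (Xsch T b \<sigma> n 0 x e k) e j
    * (1 + T / n * dx b (real (Suc j) * (T / n)) (Xsch T b \<sigma> n 0 x e j)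
         + sqrt (T / n) * dx \<sigma> (real (Suc j) * (T / n)) (Xsch T b \<sigma> n 0 x e j) * e (Suc j))"
  using assms by (simp add: Xsch_flow algebra_simps)

lemma Dn_eq: "Dn T n k F e = (F (e(k := 1)) - F (e(k := -1))) / (2 * sqrt (T / n))"
  by (simp add: Dn_def Tshift_def)

lemma Tshift_deviation_le:
  assumes "0 < T" "e \<in> sign_vectors n" "m \<in> {1..n}" "s \<in> {1, -1}"
  shows "\<bar>F e - Tshift m s F e\<bar> \<le> 2 * sqrt (T / n) * \<bar>Dn T n m F e\<bar>"
proof -
  have "2 * sqrt (T / n) * \<bar>Dn T n m F e\<bar> = \<bar>F (e(m := 1)) - F (e(m := -1))\<bar>"
    using assms(1,3) by (simp add: Dn_eq abs_divide abs_mult)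
  moreover have "F e \<in> {F (e(m := 1)), F (e(m := -1))}"
    using sign_vectors_value[OF assms(2,3)] by (auto simp: fun_upd_idem)
  moreover have "Tshift m s F e \<in> {F (e(m := 1)), F (e(m := -1))}"
    using assms(4) by (auto simp: Tshift_def)
  ultimately show ?thesis
    using abs_minus_commute[of "F (e(m := -1))" "F (e(m := 1))"] by auto
qed

lemma Dn_Xsch_Suc_affine:
  fixes T x :: real and b \<sigma> :: "real \<Rightarrow> real \<Rightarrow> real" and n k j :: nat and e :: "nat \<Rightarrow> real"
  assumes "k \<le> j"
  defines "t \<equiv> real (Suc j) * (T / n)"
    and "U \<equiv> Xsch T b \<sigma> n 0 x (e(k := 1)) j" and "V \<equiv> Xsch T b \<sigma> n 0 x (e(k := -1)) j"
  shows "Dn T n k (\<lambda>e. Xsch T b \<sigma> n 0 x e (Suc j)) e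
    = Dn T n k (\<lambda>e. Xsch T b \<sigma> n 0 x e j) e * (1 + T / n * c + sqrt (T / n) * a * e (Suc j))
      + (T / n * (b t U - b t V - c * (U - V)) + sqrt (T / n) * (\<sigma> t U - \<sigma> t V - a * (U - V)) * e (Suc j))
        / (2 * sqrt (T / n))"
proof -
  have "Xsch T b \<sigma> n 0 x (e(k := 1)) (Suc j) - Xsch T b \<sigma> n 0 x (e(k := -1)) (Suc j)
      = (U - V) * (1 + T / n * c + sqrt (T / n) * a * e (Suc j))
        + (T / n * (b t U - b t V - c * (U - V)) + sqrt (T / n) * (\<sigma> t U - \<sigma> t V - a * (U - V)) * e (Suc j))"
    using assms(1) by (simp add: U_def V_def t_def algebra_simps)
  then show ?thesis
    unfolding Dn_eq U_def[symmetric] V_def[symmetric] by (simp only: add_divide_distrib times_divide_eq_left)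
qed

lemma Dn_Xsch_before_flip: "l < k \<Longrightarrow> Dn T n k (\<lambda>e. Xsch T b \<sigma> n 0 x e l) e = 0"
  by (simp add: Dn_eq Xsch_fun_upd_later)

lemma Dn_Xsch_at_flip:
  assumes "0 < T" "1 \<le> n" "k = Suc j"
  shows "Dn T n k (\<lambda>e. Xsch T b \<sigma> n 0 x e k) e = \<sigma> (real k * (T / n)) (Xsch T b \<sigma> n 0 x e j)"
  using assms by (simp add: Dn_eq Xsch_fun_upd_later)

lemma time_grid_in_interval: "0 < T \<Longrightarrow> j \<le> n \<Longrightarrow> real j * (T / real n) \<in> {0..T}"
  by (cases "n = 0") (auto simp: field_simps)

section \<open>Bounds on the coefficients\<close>

definition first_order_bounds :: "real \<Rightarrow> (real \<Rightarrow> real) \<Rightarrow> (real \<Rightarrow> real) \<Rightarrow> bool" where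
  "first_order_bounds L f f' \<longleftrightarrow> (\<forall>x. \<bar>f' x\<bar> \<le> L) \<and> (\<forall>u v. \<bar>f u - f v\<bar> \<le> L * \<bar>u - v\<bar>)
     \<and> (\<forall>u v. \<bar>f u - f v - f' v * (u - v)\<bar> \<le> L * (u - v)\<^sup>2)"

lemma first_order_bounds_if_deriv:
  fixes f f' f'' :: "real \<Rightarrow> real"
  assumes f: "\<And>x. (f has_real_derivative f' x) (at x)" and f': "\<And>x. (f' has_real_derivative f'' x) (at x)"
    and M: "\<And>x. \<bar>f' x\<bar> \<le> M" "\<And>x. \<bar>f'' x\<bar> \<le> M"
  shows "first_order_bounds M f f'"
proof -
  have lip: "\<bar>g u - g v\<bar> \<le> M * \<bar>u - v\<bar>"
    if "\<And>x. (g has_real_derivative g' x) (at x)" "\<And>x. \<bar>g' x\<bar> \<le> M" for g g' :: "real \<Rightarrow> real" and u v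
    using field_differentiable_bound[of UNIV g g' M u v] that by (auto intro: has_field_derivative_at_within)
  have "\<bar>f u - f v - f' v * (u - v)\<bar> \<le> M * (u - v)\<^sup>2" for u v
  proof -
    define g where "g y = f y - f' v * y" for y
    have "(g has_real_derivative f' y - f' v) (at y within closed_segment u v)" for y
      unfolding g_def by (auto intro!: derivative_eq_intros has_field_derivative_at_within[OF f])
    moreover have "\<bar>f' y - f' v\<bar> \<le> M * \<bar>u - v\<bar>" if "y \<in> closed_segment u v" for y
    proof -
      have "\<bar>y - v\<bar> \<le> \<bar>u - v\<bar>"
        using segment_bound(2)[OF that] by (simp add: abs_minus_commute)
      moreover have "0 \<le> M"
        using M(2)[of 0] by linarith
      ultimately show ?thesis
        using lip[OF f' M(2), of y v] by (meson mult_left_mono order_trans)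
    qed
    ultimately have "\<bar>g u - g v\<bar> \<le> M * \<bar>u - v\<bar> * \<bar>u - v\<bar>"
      using field_differentiable_bound[of "closed_segment u v" g "\<lambda>y. f' y - f' v" "M * \<bar>u - v\<bar>" u v]
      by auto
    then show ?thesis
      by (simp add: g_def algebra_simps power2_eq_square)
  qed
  then show ?thesis
    unfolding first_order_bounds_def using lip[OF f M(1)] M(1) by blast
qed

lemma first_order_remainder_at_endpoint:
  assumes "first_order_bounds L f f'" "w \<in> {u, v}"
  shows "\<bar>f u - f v - f' w * (u - v)\<bar> \<le> L * (u - v)\<^sup>2"
proof -
  have "\<bar>f x - f y - f' y * (x - y)\<bar> \<le> L * (x - y)\<^sup>2" for x y
    using assms(1) unfolding first_order_bounds_def by blast
  from this[of u v] this[of v u] assms(2) show ?thesis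
    by (auto simp: abs_minus_commute power2_commute algebra_simps)
qed

definition diff_quot :: "(real \<Rightarrow> real) \<Rightarrow> real \<Rightarrow> real \<Rightarrow> real" where
  "diff_quot f u v = (if u = v then 0 else (f u - f v) / (u - v))"

lemma diff_quot_mult: "f u - f v = diff_quot f u v * (u - v)"
  by (simp add: diff_quot_def)

lemma abs_diff_quot_le: "first_order_bounds L f f' \<Longrightarrow> \<bar>diff_quot f u v\<bar> \<le> L"
  by (auto simp: diff_quot_def first_order_bounds_def abs_divide divide_le_eq)

locale euler_coefficients =
  fixes T L \<delta> :: real and b \<sigma> :: "real \<Rightarrow> real \<Rightarrow> real"
  assumes T_pos: "0 < T" and \<delta>_pos: "0 < \<delta>"
    and b_bounds: "\<And>t. t \<in> {0..T} \<Longrightarrow> first_order_bounds L (b t) (dx b t)"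
    and \<sigma>_bounds: "\<And>t. t \<in> {0..T} \<Longrightarrow> first_order_bounds L (\<sigma> t) (dx \<sigma> t)"
    and \<sigma>_range: "\<And>t x. t \<in> {0..T} \<Longrightarrow> \<delta> \<le> \<sigma> t x \<and> \<sigma> t x \<le> L"

lemma euler_coefficients_if_assumption_A:
  assumes "0 < T" "assumption_A T b \<sigma>"
  shows "\<exists>L \<delta>. euler_coefficients T L \<delta> b \<sigma>"
proof -
  obtain \<delta> where \<delta>: "0 < \<delta>" "\<And>t x. t \<in> {0..T} \<Longrightarrow> \<delta> \<le> \<sigma> t x"
    using assms(2) unfolding assumption_A_def by blast
  have "cont_bdd T \<sigma>" "cont_bdd T (dx b)" "cont_bdd T (dxx b)" "cont_bdd T (dx \<sigma>)" "cont_bdd T (dxx \<sigma>)"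
    using assms(2) unfolding assumption_A_def by auto
  then obtain M1 M2 M3 M4 M5 where "\<And>t x. t \<in> {0..T} \<Longrightarrow>
      \<bar>\<sigma> t x\<bar> \<le> M1 \<and> \<bar>dx b t x\<bar> \<le> M2 \<and> \<bar>dxx b t x\<bar> \<le> M3 \<and> \<bar>dx \<sigma> t x\<bar> \<le> M4 \<and> \<bar>dxx \<sigma> t x\<bar> \<le> M5"
    unfolding cont_bdd_def by metis
  moreover define M where "M = max M1 (max M2 (max M3 (max M4 M5)))"
  moreover have "M1 \<le> M" "M2 \<le> M" "M3 \<le> M" "M4 \<le> M" "M5 \<le> M"
    by (simp_all add: M_def)
  ultimately have M: "\<And>t x. t \<in> {0..T} \<Longrightarrow>
      \<bar>\<sigma> t x\<bar> \<le> M \<and> \<bar>dx b t x\<bar> \<le> M \<and> \<bar>dxx b t x\<bar> \<le> M \<and> \<bar>dx \<sigma> t x\<bar> \<le> M \<and> \<bar>dxx \<sigma> t x\<bar> \<le> M"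
    by (meson order_trans)
  have "first_order_bounds M (b t) (dx b t)" "first_order_bounds M (\<sigma> t) (dx \<sigma> t)" if "t \<in> {0..T}" for t
    using assms(2) M[OF that] that unfolding assumption_A_def twice_space_diff_def
    by (auto intro!: first_order_bounds_if_deriv)
  then have "euler_coefficients T M \<delta> b \<sigma>"
    using assms(1) \<delta> M by unfold_locales (auto simp: abs_le_iff)
  then show ?thesis
    by blast
qed

section \<open>Moment estimates\<close>

context euler_coefficients
begin

lemma L_nonneg: "0 \<le> L"
  using \<sigma>_range[of 0 0] T_pos \<delta>_pos by force

lemma coefficient_bounds_on_grid:
  "j < n \<Longrightarrow> first_order_bounds L (b (real (Suc j) * (T / n))) (dx b (real (Suc j) * (T / n)))"
  "j < n \<Longrightarrow> first_order_bounds L (\<sigma> (real (Suc j) * (T / n))) (dx \<sigma> (real (Suc j) * (T / n)))"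
  "j < n \<Longrightarrow> \<delta> \<le> \<sigma> (real (Suc j) * (T / n)) y \<and> \<sigma> (real (Suc j) * (T / n)) y \<le> L"
  using b_bounds \<sigma>_bounds \<sigma>_range time_grid_in_interval[OF T_pos, of "Suc j" n] by auto

lemma Dn_Xsch_moment_bound:
  assumes est: "symmetric_step_estimate r T L K" and K: "0 \<le> K" and r: "0 \<le> r"
    and n: "1 \<le> n" and k: "1 \<le> k" "k \<le> n" and l: "l \<le> n"
  shows "Erad n (\<lambda>e. \<bar>Dn T n k (\<lambda>e'. Xsch T b \<sigma> n 0 x e' l) e\<bar> powr r) \<le> exp (K * T) * L powr r"
proof (cases "l < k")
  case True
  then show ?thesis
    by (simp add: Dn_Xsch_before_flip Erad_const)
next
  case False
  define Z where "Z e j = Dn T n k (\<lambda>e'. Xsch T b \<sigma> n 0 x e' j) e" for e j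
  define U where "U e j = Xsch T b \<sigma> n 0 x (e(k := 1)) j" for e j
  define V where "V e j = Xsch T b \<sigma> n 0 x (e(k := -1)) j" for e j
  \<comment> \<open>with difference quotients as coefficients the recursion is exact and has no forcing\<close>
  define c where "c e j = diff_quot (b (real (Suc j) * (T / n))) (U e j) (V e j)" for e j
  define a where "a e j = diff_quot (\<sigma> (real (Suc j) * (T / n))) (U e j) (V e j)" for e j
  have "Erad n (\<lambda>e. \<bar>Z e l\<bar> powr r) \<le> exp (K * T) * (Erad n (\<lambda>e. \<bar>Z e k\<bar> powr r) + K * T * 0)"
  proof (rule Erad_linear_recursion_moment_le[OF est T_pos n K order_refl, of k l _ c a "\<lambda>_ _. 0" "\<lambda>_ _. 0"])
    show "k \<le> l" "l \<le> n"
      using False l by auto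
    fix j assume j: "k \<le> j" "j < n"
    show "Z e (Suc j) = Z e j * (1 + T / n * c e j + sqrt (T / n) * a e j * e (Suc j))
        + T / n * 0 + sqrt (T / n) * 0 * e (Suc j)" for e
      using Dn_Xsch_Suc_affine[OF j(1), of T n b \<sigma> x e "c e j" "a e j"]
      by (simp add: Z_def c_def a_def U_def V_def flip: diff_quot_mult)
    have "(e(Suc j := s))(k := t) = (e(k := t))(Suc j := s)" for e :: "nat \<Rightarrow> real" and s t
      using j by (simp add: fun_upd_twist)
    then show "flip_invariant (Suc j) (\<lambda>e. (Z e j, c e j, a e j, 0::real, 0::real, 0::real))"
      by (simp add: flip_invariant_def Z_def c_def a_def U_def V_def Dn_eq Xsch_fun_upd_later)
    show "\<bar>c e j\<bar> \<le> L \<and> \<bar>a e j\<bar> \<le> L \<and> \<bar>0::real\<bar> \<le> 0 \<and> \<bar>0::real\<bar> \<le> 0" for e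
      using coefficient_bounds_on_grid[OF j(2)] by (simp add: c_def a_def abs_diff_quot_le)
    show "Erad n (\<lambda>e. 0 powr r) \<le> 0"
      by (simp add: Erad_const)
  qed
  also have "Erad n (\<lambda>e. \<bar>Z e k\<bar> powr r) \<le> L powr r"
  proof -
    obtain i where i: "k = Suc i" "i < n"
      using k by (cases k) auto
    have "Z e k = \<sigma> (real (Suc i) * (T / n)) (Xsch T b \<sigma> n 0 x e i)" for e
      unfolding Z_def i(1) by (rule Dn_Xsch_at_flip[OF T_pos n refl])
    then have "\<bar>Z e k\<bar> \<le> L" for e
      using coefficient_bounds_on_grid(3)[OF i(2), of "Xsch T b \<sigma> n 0 x e i"] \<delta>_pos by (simp add: abs_le_iff)
    then show ?thesis
      using Erad_mono[of n "\<lambda>e. \<bar>Z e k\<bar> powr r" "\<lambda>_. L powr r"] r by (simp add: Erad_const powr_mono2)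
  qed
  finally show ?thesis
    by (simp add: Z_def)
qed

lemma Dn_Xsch_square_moment_bound:
  assumes est: "symmetric_step_estimate (2 * p) T L K" and K: "0 \<le> K" and p: "0 \<le> p" and c: "0 \<le> c"
    and n: "1 \<le> n" and k: "1 \<le> k" "k \<le> n" and l: "l \<le> n"
  shows "Erad n (\<lambda>e. (c * (Dn T n k (\<lambda>e'. Xsch T b \<sigma> n 0 x e' l) e)\<^sup>2) powr p)
    \<le> c powr p * (exp (K * T) * L powr (2 * p))"
proof -
  have "(c * y\<^sup>2) powr p = c powr p * \<bar>y\<bar> powr (2 * p)" for y :: real
  proof -
    have "y\<^sup>2 = \<bar>y\<bar> powr 2"
      by simp
    then have "(y\<^sup>2) powr p = \<bar>y\<bar> powr (2 * p)"
      by (simp only: powr_powr)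
    then show ?thesis
      unfolding powr_mult by simp
  qed
  then show ?thesis
    using Dn_Xsch_moment_bound[OF est K _ n k l, of x] p c by (simp add: Erad_scale mult_left_mono)
qed

lemma Tshift_Xsch_moment_bound:
  assumes est: "symmetric_step_estimate p T L K" and K: "0 \<le> K" and p: "0 \<le> p"
    and n: "1 \<le> n" and m: "1 \<le> m" "m \<le> n" and l: "l \<le> n" and s: "s \<in> {1, -1}"
  shows "Erad n (\<lambda>e. \<bar>Xsch T b \<sigma> n 0 x e l - Tshift m s (\<lambda>e'. Xsch T b \<sigma> n 0 x e' l) e\<bar> powr p)
    \<le> 2 powr p * exp (K * T) * L powr p * (T / n) powr (p / 2)"
proof -
  let ?D = "\<lambda>e. \<bar>Dn T n m (\<lambda>e'. Xsch T b \<sigma> n 0 x e' l) e\<bar> powr p"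
  have "Erad n (\<lambda>e. \<bar>Xsch T b \<sigma> n 0 x e l - Tshift m s (\<lambda>e'. Xsch T b \<sigma> n 0 x e' l) e\<bar> powr p)
      \<le> Erad n (\<lambda>e. (2 * sqrt (T / n)) powr p * ?D e)"
  proof (rule Erad_mono)
    fix e assume "e \<in> sign_vectors n"
    then have "\<bar>Xsch T b \<sigma> n 0 x e l - Tshift m s (\<lambda>e'. Xsch T b \<sigma> n 0 x e' l) e\<bar>
        \<le> 2 * sqrt (T / n) * \<bar>Dn T n m (\<lambda>e'. Xsch T b \<sigma> n 0 x e' l) e\<bar>"
      using m by (intro Tshift_deviation_le[OF T_pos _ _ s]) auto
    then show "\<bar>Xsch T b \<sigma> n 0 x e l - Tshift m s (\<lambda>e'. Xsch T b \<sigma> n 0 x e' l) e\<bar> powr p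
        \<le> (2 * sqrt (T / n)) powr p * ?D e"
      using p by (simp add: powr_mono2 flip: powr_mult)
  qed
  also have "\<dots> = 2 powr p * (T / n) powr (p / 2) * Erad n ?D"
    using T_pos by (simp add: Erad_scale powr_mult sqrt_powr)
  also have "\<dots> \<le> 2 powr p * (T / n) powr (p / 2) * (exp (K * T) * L powr p)"
    using Dn_Xsch_moment_bound[OF est K p n m l] by (intro mult_left_mono) auto
  finally show ?thesis
    by (simp add: mult_ac)
qed

lemma flip_remainder_le:
  fixes x :: real and e :: "nat \<Rightarrow> real"
  assumes e: "e \<in> sign_vectors n" and k: "k \<in> {1..n}" and j: "j < n" and s: "\<delta> \<le> s"
  defines "h \<equiv> T / n" and "t \<equiv> real (Suc j) * (T / n)" and "X \<equiv> Xsch T b \<sigma> n 0 x e j"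
    and "U \<equiv> Xsch T b \<sigma> n 0 x (e(k := 1)) j" and "V \<equiv> Xsch T b \<sigma> n 0 x (e(k := -1)) j"
  shows "\<bar>b t U - b t V - dx b t X * (U - V)\<bar> / (2 * h * s) \<le> 2 * L / \<delta> * (Dn T n k (\<lambda>e. Xsch T b \<sigma> n 0 x e j) e)\<^sup>2"
    and "\<bar>\<sigma> t U - \<sigma> t V - dx \<sigma> t X * (U - V)\<bar> / (2 * h * s) \<le> 2 * L / \<delta> * (Dn T n k (\<lambda>e. Xsch T b \<sigma> n 0 x e j) e)\<^sup>2"
proof -
  let ?D = "(Dn T n k (\<lambda>e. Xsch T b \<sigma> n 0 x e j) e)\<^sup>2"
  have h: "0 < h"
    using T_pos k by (simp add: h_def)
  have scale: "\<bar>r\<bar> / (2 * h * s) \<le> 2 * L / \<delta> * ?D" if "\<bar>r\<bar> \<le> L * (U - V)\<^sup>2" for r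
  proof -
    have "(U - V)\<^sup>2 = 4 * h * ?D"
      using T_pos k by (simp add: Dn_eq U_def V_def h_def power_divide)
    then have "\<bar>r\<bar> / (2 * h * s) \<le> 4 * L * h * ?D / (2 * h * \<delta>)"
      using that s h \<delta>_pos L_nonneg by (intro frac_le) (auto simp: mult_ac)
    also have "\<dots> = 2 * L / \<delta> * ?D"
      using h \<delta>_pos by simp
    finally show ?thesis .
  qed
  have X: "X \<in> {U, V}"
    using sign_vectors_value[OF e k] by (auto simp: X_def U_def V_def fun_upd_idem)
  show "\<bar>b t U - b t V - dx b t X * (U - V)\<bar> / (2 * h * s) \<le> 2 * L / \<delta> * ?D"
    using first_order_remainder_at_endpoint[OF coefficient_bounds_on_grid(1)[OF j] X] unfolding t_def by (rule scale)
  show "\<bar>\<sigma> t U - \<sigma> t V - dx \<sigma> t X * (U - V)\<bar> / (2 * h * s) \<le> 2 * L / \<delta> * ?D"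
    using first_order_remainder_at_endpoint[OF coefficient_bounds_on_grid(2)[OF j] X] unfolding t_def by (rule scale)
qed

definition grad_error :: "nat \<Rightarrow> real \<Rightarrow> nat \<Rightarrow> (nat \<Rightarrow> real) \<Rightarrow> nat \<Rightarrow> real" where
  "grad_error n x k e j = (gradX T b \<sigma> n k (Xsch T b \<sigma> n 0 x e k) e j
     - Dn T n (Suc k) (\<lambda>e'. Xsch T b \<sigma> n 0 x e' j) e / \<sigma> (real (Suc k) * (T / n)) (Xsch T b \<sigma> n 0 x e k))
     / sqrt (T / n)"

lemma grad_error_at_flip:
  assumes n: "1 \<le> n" and k: "k < n" and e: "e \<in> sign_vectors n"
  shows "\<bar>grad_error n x k e (Suc k)\<bar> \<le> L * (sqrt T + 1)"
proof -
  define h where "h = T / n"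
  have h: "0 < h" "h \<le> T"
    using T_pos n by (auto simp: h_def field_simps)
  let ?t = "real (Suc k) * h" and ?X = "Xsch T b \<sigma> n 0 x e k"
  have "\<sigma> ?t ?X \<noteq> 0"
    using coefficient_bounds_on_grid(3)[OF k, of ?X] \<delta>_pos by (auto simp: h_def)
  moreover have "Dn T n (Suc k) (\<lambda>e'. Xsch T b \<sigma> n 0 x e' (Suc k)) e = \<sigma> ?t ?X"
    unfolding h_def by (rule Dn_Xsch_at_flip[OF T_pos n refl])
  moreover have "gradX T b \<sigma> n k ?X e (Suc k) = 1 + h * dx b ?t ?X + sqrt h * dx \<sigma> ?t ?X * e (Suc k)"
    using gradX_Suc_flow[of k k T b \<sigma> n x e] by (simp add: h_def gradX_before_start)
  ultimately have "grad_error n x k e (Suc k) = sqrt h * dx b ?t ?X + dx \<sigma> ?t ?X * e (Suc k)"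
    using h by (simp add: grad_error_def h_def[symmetric] field_simps sqrt_mult_sqrt_mult)
  also have "\<bar>\<dots>\<bar> \<le> sqrt T * L + L * 1"
    using coefficient_bounds_on_grid[OF k] h sign_vectors_value[OF e, of "Suc k"] k
    by (auto simp: h_def first_order_bounds_def abs_mult
        intro!: order_trans[OF abs_triangle_ineq] add_mono mult_mono)
  finally show ?thesis
    by (simp add: algebra_simps)
qed

lemma grad_error_Suc:
  fixes x :: real and e :: "nat \<Rightarrow> real"
  assumes n: "1 \<le> n" and j: "Suc k \<le> j" "j < n"
  defines "h \<equiv> T / n" and "t \<equiv> real (Suc j) * (T / n)" and "X \<equiv> Xsch T b \<sigma> n 0 x e j"
    and "U \<equiv> Xsch T b \<sigma> n 0 x (e(Suc k := 1)) j" and "V \<equiv> Xsch T b \<sigma> n 0 x (e(Suc k := -1)) j"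
  shows "grad_error n x k e (Suc j) = grad_error n x k e j * (1 + h * dx b t X + sqrt h * dx \<sigma> t X * e (Suc j))
    - (h * (b t U - b t V - dx b t X * (U - V)) + sqrt h * (\<sigma> t U - \<sigma> t V - dx \<sigma> t X * (U - V)) * e (Suc j))
      / (2 * h * \<sigma> (real (Suc k) * h) (Xsch T b \<sigma> n 0 x e k))"
proof -
  have h: "0 < h"
    using T_pos n by (simp add: h_def)
  let ?\<sigma>0 = "\<sigma> (real (Suc k) * h) (Xsch T b \<sigma> n 0 x e k)"
  have "?\<sigma>0 \<noteq> 0"
    using coefficient_bounds_on_grid(3)[of k n "Xsch T b \<sigma> n 0 x e k"] j \<delta>_pos by (auto simp: h_def)
  moreover have G: "gradX T b \<sigma> n k (Xsch T b \<sigma> n 0 x e k) e (Suc j)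
      = gradX T b \<sigma> n k (Xsch T b \<sigma> n 0 x e k) e j * (1 + h * dx b t X + sqrt h * dx \<sigma> t X * e (Suc j))"
    using gradX_Suc_flow[of k j T b \<sigma> n x e] j by (simp add: h_def t_def X_def)
  moreover have Z: "Dn T n (Suc k) (\<lambda>e. Xsch T b \<sigma> n 0 x e (Suc j)) e
      = Dn T n (Suc k) (\<lambda>e. Xsch T b \<sigma> n 0 x e j) e * (1 + h * dx b t X + sqrt h * dx \<sigma> t X * e (Suc j))
        + (h * (b t U - b t V - dx b t X * (U - V)) + sqrt h * (\<sigma> t U - \<sigma> t V - dx \<sigma> t X * (U - V)) * e (Suc j))
          / (2 * sqrt h)"
    using Dn_Xsch_Suc_affine[OF j(1), of T n b \<sigma> x e "dx b t X" "dx \<sigma> t X"]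
    by (simp only: h_def t_def U_def V_def)
  ultimately show ?thesis
    using h unfolding grad_error_def G Z h_def[symmetric] by (simp add: field_simps sqrt_mult_sqrt_mult)
qed

lemma grad_error_moment_le:
  assumes est: "symmetric_step_estimate p T L K" and K: "0 \<le> K" and p: "0 \<le> p"
    and est2: "symmetric_step_estimate (2 * p) T L K2" and K2: "0 \<le> K2"
    and n: "1 \<le> n" and km: "k < m" "m \<le> n"
  shows "Erad n (\<lambda>e. \<bar>grad_error n x k e m\<bar> powr p)
    \<le> exp (K * T) * ((L * (sqrt T + 1)) powr p + K * T * ((2 * L / \<delta>) powr p * (exp (K2 * T) * L powr (2 * p))))"
proof -
  define h where "h = T / n"
  have h: "0 < h"
    using T_pos n by (simp add: h_def)
  define X where "X e j = Xsch T b \<sigma> n 0 x e j" for e j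
  define t where "t j = real (Suc j) * h" for j
  define \<sigma>0 where "\<sigma>0 e = \<sigma> (real (Suc k) * h) (X e k)" for e
  have \<sigma>0: "\<delta> \<le> \<sigma>0 e" for e
    using coefficient_bounds_on_grid(3)[of k] km by (simp add: \<sigma>0_def h_def)
  define Z where "Z e j = Dn T n (Suc k) (\<lambda>e'. X e' j) e" for e j
  define U where "U e j = X (e(Suc k := 1)) j" for e j
  define V where "V e j = X (e(Suc k := -1)) j" for e j
  define c where "c e j = dx b (t j) (X e j)" for e j
  define a where "a e j = dx \<sigma> (t j) (X e j)" for e j
  define Rb where "Rb e j = b (t j) (U e j) - b (t j) (V e j) - c e j * (U e j - V e j)" for e j
  define Rs where "Rs e j = \<sigma> (t j) (U e j) - \<sigma> (t j) (V e j) - a e j * (U e j - V e j)" for e j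
  define \<alpha> where "\<alpha> e j = - Rb e j / (2 * h * \<sigma>0 e)" for e j
  define \<beta> where "\<beta> e j = - Rs e j / (2 * h * \<sigma>0 e)" for e j
  \<comment> \<open>the Taylor remainders are quadratic in the flipped difference \<open>2 sqrt h Z\<close>\<close>
  define d where "d e j = 2 * L / \<delta> * (Z e j)\<^sup>2" for e j
  define D where "D = (2 * L / \<delta>) powr p * (exp (K2 * T) * L powr (2 * p))"
  have "Erad n (\<lambda>e. \<bar>grad_error n x k e m\<bar> powr p)
      \<le> exp (K * T) * (Erad n (\<lambda>e. \<bar>grad_error n x k e (Suc k)\<bar> powr p) + K * T * D)"
  proof (rule Erad_linear_recursion_moment_le[where Z = "grad_error n x k" and c = c and a = a
        and \<alpha> = \<alpha> and \<beta> = \<beta> and d = d, OF est T_pos n K])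
    show "0 \<le> D" "Suc k \<le> m" "m \<le> n"
      using km by (simp_all add: D_def)
    fix j assume j: "Suc k \<le> j" "j < n"
    show "grad_error n x k e (Suc j) = grad_error n x k e j * (1 + T / n * c e j + sqrt (T / n) * a e j * e (Suc j))
        + T / n * \<alpha> e j + sqrt (T / n) * \<beta> e j * e (Suc j)" for e
    proof -
      have "grad_error n x k e (Suc j) = grad_error n x k e j * (1 + h * c e j + sqrt h * a e j * e (Suc j))
          - (h * Rb e j + sqrt h * Rs e j * e (Suc j)) / (2 * h * \<sigma>0 e)"
        using grad_error_Suc[OF n j, of x e] unfolding Rb_def Rs_def c_def a_def t_def U_def V_def X_def \<sigma>0_def h_def .
      moreover have "h * \<alpha> e j + sqrt h * \<beta> e j * e (Suc j) = - (h * Rb e j + sqrt h * Rs e j * e (Suc j)) / (2 * h * \<sigma>0 e)"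
        using \<sigma>0[of e] \<delta>_pos h by (simp add: \<alpha>_def \<beta>_def field_simps)
      ultimately show ?thesis
        unfolding h_def[symmetric] by linarith
    qed
    have "(e(Suc j := s))(Suc k := r) = (e(Suc k := r))(Suc j := s)" for e :: "nat \<Rightarrow> real" and s r
      using j by (simp add: fun_upd_twist)
    then show "flip_invariant (Suc j) (\<lambda>e. (grad_error n x k e j, c e j, a e j, \<alpha> e j, \<beta> e j, d e j))"
      using j by (simp add: flip_invariant_def grad_error_def Z_def \<sigma>0_def c_def a_def \<alpha>_def \<beta>_def Rb_def Rs_def d_def
          U_def V_def X_def Dn_eq Xsch_fun_upd_later gradX_fun_upd_later)
    show "\<bar>c e j\<bar> \<le> L \<and> \<bar>a e j\<bar> \<le> L \<and> \<bar>\<alpha> e j\<bar> \<le> d e j \<and> \<bar>\<beta> e j\<bar> \<le> d e j"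
      if e: "e \<in> sign_vectors n" for e
    proof -
      have "Suc k \<in> {1..n}"
        using j by simp
      note R = flip_remainder_le[OF e this j(2) \<sigma>0[of e], of x]
      have "\<bar>\<alpha> e j\<bar> = \<bar>Rb e j\<bar> / (2 * h * \<sigma>0 e)" "\<bar>\<beta> e j\<bar> = \<bar>Rs e j\<bar> / (2 * h * \<sigma>0 e)"
        using h \<sigma>0[of e] \<delta>_pos by (simp_all add: \<alpha>_def \<beta>_def abs_divide)
      moreover have "\<bar>Rb e j\<bar> / (2 * h * \<sigma>0 e) \<le> d e j" "\<bar>Rs e j\<bar> / (2 * h * \<sigma>0 e) \<le> d e j"
        unfolding Rb_def Rs_def c_def a_def U_def V_def X_def Z_def t_def h_def d_def by (rule R(1), rule R(2))
      moreover have "\<bar>c e j\<bar> \<le> L" "\<bar>a e j\<bar> \<le> L"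
        using coefficient_bounds_on_grid[OF j(2)] by (simp_all add: c_def a_def t_def h_def first_order_bounds_def)
      ultimately show ?thesis
        by simp
    qed
    show "Erad n (\<lambda>e. d e j powr p) \<le> D"
      unfolding d_def D_def Z_def X_def using j L_nonneg \<delta>_pos
      by (intro Dn_Xsch_square_moment_bound[OF est2 K2 p _ n]) auto
  qed
  also have "Erad n (\<lambda>e. \<bar>grad_error n x k e (Suc k)\<bar> powr p) \<le> (L * (sqrt T + 1)) powr p"
    using Erad_mono[of n "\<lambda>e. \<bar>grad_error n x k e (Suc k)\<bar> powr p" "\<lambda>_. (L * (sqrt T + 1)) powr p"]
      grad_error_at_flip[OF n km(1)[THEN order.strict_trans2, OF km(2)]] p
    by (simp add: Erad_const powr_mono2)
  finally show ?thesis
    by (simp add: D_def mult_left_mono)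
qed

lemma gradX_Dn_error_moment_bound:
  assumes est: "symmetric_step_estimate p T L K" and K: "0 \<le> K" and p: "0 \<le> p"
    and est2: "symmetric_step_estimate (2 * p) T L K2" and K2: "0 \<le> K2"
    and n: "1 \<le> n" and km: "k < m" "m \<le> n"
  shows "Erad n (\<lambda>e. \<bar>gradX T b \<sigma> n k (Xsch T b \<sigma> n 0 x e k) e m
      - Dn T n (Suc k) (\<lambda>e'. Xsch T b \<sigma> n 0 x e' m) e / \<sigma> (real (Suc k) * (T / n)) (Xsch T b \<sigma> n 0 x e k)\<bar> powr p)
    \<le> exp (K * T) * ((L * (sqrt T + 1)) powr p + K * T * ((2 * L / \<delta>) powr p * (exp (K2 * T) * L powr (2 * p))))
      * (T / n) powr (p / 2)"
proof -
  have h: "0 < T / n"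
    using T_pos n by simp
  have "\<bar>gradX T b \<sigma> n k (Xsch T b \<sigma> n 0 x e k) e m
      - Dn T n (Suc k) (\<lambda>e'. Xsch T b \<sigma> n 0 x e' m) e / \<sigma> (real (Suc k) * (T / n)) (Xsch T b \<sigma> n 0 x e k)\<bar> powr p
    = (T / n) powr (p / 2) * \<bar>grad_error n x k e m\<bar> powr p" for e
  proof -
    have "\<bar>gradX T b \<sigma> n k (Xsch T b \<sigma> n 0 x e k) e m
        - Dn T n (Suc k) (\<lambda>e'. Xsch T b \<sigma> n 0 x e' m) e / \<sigma> (real (Suc k) * (T / n)) (Xsch T b \<sigma> n 0 x e k)\<bar>
      = sqrt (T / n) * \<bar>grad_error n x k e m\<bar>"
      using T_pos n by (simp add: grad_error_def abs_divide)
    then show ?thesis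
      using h by (simp add: powr_mult sqrt_powr)
  qed
  then show ?thesis
    using grad_error_moment_le[OF assms, of x] h by (simp add: Erad_scale mult.commute mult_left_mono)
qed

end

theorem mainTheorem11:
  fixes T p :: real and b \<sigma> :: "real \<Rightarrow> real \<Rightarrow> real"
  assumes "T > 0" and "assumption_A T b \<sigma>" and "p \<ge> 2"
  shows "\<exists>C. \<forall>n::nat. \<forall>x::real. n \<ge> 1 \<longrightarrow>
    (\<forall>l m s. 1 \<le> l \<and> l \<le> n \<and> 1 \<le> m \<and> m \<le> n \<and> s \<in> {1, -1} \<longrightarrow>
       Erad n (\<lambda>e. \<bar>Xsch T b \<sigma> n 0 x e l - Tshift m s (\<lambda>e'. Xsch T b \<sigma> n 0 x e' l) e\<bar> powr p)
         \<le> C * (T / n) powr (p / 2)) \<and>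
    (\<forall>k m. k < m \<and> m \<le> n \<longrightarrow>
       Erad n (\<lambda>e. \<bar>gradX T b \<sigma> n k (Xsch T b \<sigma> n 0 x e k) e m
           - Dn T n (Suc k) (\<lambda>e'. Xsch T b \<sigma> n 0 x e' m) e
             / \<sigma> (real (Suc k) * (T / n)) (Xsch T b \<sigma> n 0 x e k)\<bar> powr p)
         \<le> C * (T / n) powr (p / 2)) \<and>
    (\<forall>k m. 1 \<le> k \<and> k \<le> m \<and> m \<le> n \<longrightarrow>
       Erad n (\<lambda>e. \<bar>Dn T n k (\<lambda>e'. Xsch T b \<sigma> n 0 x e' m) e\<bar> powr p) \<le> C)"
proof -
  obtain L \<delta> where "euler_coefficients T L \<delta> b \<sigma>"
    using euler_coefficients_if_assumption_A assms(1,2) by blast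
  then interpret euler_coefficients T L \<delta> b \<sigma> .
  have p: "0 \<le> p" "2 \<le> 2 * p"
    using assms(3) by simp_all
  obtain K where K: "symmetric_step_estimate p T L K" "0 \<le> K"
    using symmetric_step_estimate_exists[OF assms(3) T_pos L_nonneg] by blast
  obtain K2 where K2: "symmetric_step_estimate (2 * p) T L K2" "0 \<le> K2"
    using symmetric_step_estimate_exists[OF p(2) T_pos L_nonneg] by blast
  define C1 where "C1 = 2 powr p * exp (K * T) * L powr p"
  define C2 where "C2 = exp (K * T) * ((L * (sqrt T + 1)) powr p
    + K * T * ((2 * L / \<delta>) powr p * (exp (K2 * T) * L powr (2 * p))))"
  define C3 where "C3 = exp (K * T) * L powr p"
  have C: "C1 \<le> max C1 (max C2 C3)" "C2 \<le> max C1 (max C2 C3)" "C3 \<le> max C1 (max C2 C3)"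
    by simp_all
  show ?thesis
    apply (intro exI[of _ "max C1 (max C2 C3)"] allI impI conjI)
    subgoal for n x l m s
      using Tshift_Xsch_moment_bound[OF K p(1), of n m l s x] mult_right_mono[OF C(1), of "(T / n) powr (p / 2)"]
      by (simp add: C1_def)
    subgoal for n x k m
      using gradX_Dn_error_moment_bound[OF K p(1) K2, of n k m x] mult_right_mono[OF C(2), of "(T / n) powr (p / 2)"]
      by (simp add: C2_def)
    subgoal for n x k m
      using Dn_Xsch_moment_bound[OF K p(1), of n k m x] C(3) by (simp add: C3_def)
    done
qed

end
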